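(* Let $1<c_1<c_2$ be constants. There are constants $\chi,l>1$ such that for every $p=d/n$ with $c_1<d=d(n)<c_2$, a.a.s. every set $S\subseteq V(H_{n,p})$ inducing a connected subgraph with $\chi\ln n\le|S|\le N$ contains at least $|S|/l$ vertices of $\mathrm{C}(H_{n,p})$.
   Context: $G_{n,p}$ is the random graph on $V_n=\{1,\dots,n\}$ with each possible edge present independently with probability $p$; $H_{n,p}$ is its largest component; a.a.s. means with probability tending to $1$. The core $\mathrm{C}(H_{n,p})$ is the maximal subgraph of $H_{n,p}$ with minimum degree at least $2$, and $N=|V(\mathrm{C}(H_{n,p}))|$. *)

theory Defs
  imports "HOL-Probability.Probability"
begin

definition all_edges :: "nat \<Rightarrow> nat set set" where
  "all_edges n = {e. \<exists>i j. i \<in> {1..n} \<and> j \<in> {1..n} \<and> i \<noteq> j \<and> e = {i, j}}"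

definition Gnp :: "nat \<Rightarrow> real \<Rightarrow> nat set set pmf" where
  "Gnp n p = map_pmf (\<lambda>f. {e \<in> all_edges n. f e})
                     (Pi_pmf (all_edges n) False (\<lambda>_. bernoulli_pmf p))"

definition adj :: "nat set set \<Rightarrow> nat set \<Rightarrow> (nat \<times> nat) set" where
  "adj E W = {(x, y). x \<in> W \<and> y \<in> W \<and> {x, y} \<in> E}"

definition component :: "nat set set \<Rightarrow> nat set \<Rightarrow> nat \<Rightarrow> nat set" where
  "component E V v = {u \<in> V. (v, u) \<in> (adj E V)\<^sup>*}"

definition components :: "nat set set \<Rightarrow> nat set \<Rightarrow> nat set set" where
  "components E V = component E V ` V"

definition is_largest_component :: "nat \<Rightarrow> nat set set \<Rightarrow> nat set \<Rightarrow> bool" where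
  "is_largest_component n E H \<longleftrightarrow>
     H \<in> components E {1..n} \<and> (\<forall>C \<in> components E {1..n}. card C \<le> card H)"

definition induces_connected :: "nat set set \<Rightarrow> nat set \<Rightarrow> bool" where
  "induces_connected E S \<longleftrightarrow> S \<noteq> {} \<and> (\<forall>u \<in> S. \<forall>v \<in> S. (u, v) \<in> (adj E S)\<^sup>*)"

text \<open>Vertex set of the core (2-core) of the subgraph induced on H: the maximal subgraph
  of minimum degree at least 2. Such a maximal subgraph is induced, and its vertex set is
  the union of all W \<subseteq> H in which every vertex has at least 2 neighbours inside W.\<close>
definition core :: "nat set set \<Rightarrow> nat set \<Rightarrow> nat set" where
  "core E H = \<Union>{W. W \<subseteq> H \<and> (\<forall>v \<in> W. card {u \<in> W. {u, v} \<in> E} \<ge> 2)}"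

end

theory Submission
  imports Defs
begin

text \<open>Outside the core \<open>C\<close>, the vertices of the component \<open>H\<close> can be peeled off one at a
  time, each having at most one neighbour in \<open>C\<close> or among the vertices peeled later; that
  neighbour is its parent, so \<open>H - C\<close> is a forest of pendant trees hanging off the core.
  Adding to a connected \<open>S \<subseteq> H\<close> the pendant subtrees below its non-core vertices yields a
  set \<open>X\<close> with a spanning tree such that every edge at a vertex of \<open>X - D\<close> is a tree edge,
  where \<open>D\<close> consists of \<open>S \<inter> C\<close> and at most one further vertex. If \<open>S\<close> has fewer than
  \<open>\<theta> |S| / 2\<close> core vertices, then \<open>|D| \<le> \<theta> |X|\<close>: the random graph contains a tree on
  \<open>m = |X| \<ge> \<chi> ln n\<close> vertices while about \<open>(1 - \<theta>) m n\<close> further pairs are absent. A union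
  bound over \<open>X\<close>, \<open>D\<close>, the root and the parent map, together with the entropy estimate
  \<open>(n choose m) (m/n)^m \<le> (1 - m/n)^-(n-m)\<close>, bounds the probability of this for fixed \<open>m\<close>
  by \<open>(n/c) e^(2c) e^(-\<gamma> m/2)\<close>; summing over \<open>m \<ge> \<chi> ln n\<close> gives \<open>O(1/n)\<close>.\<close>

lemma all_edges_eq: "all_edges n = {e. e \<subseteq> {1..n} \<and> card e = 2}"
  unfolding all_edges_def by (auto simp: card_2_iff) blast

lemma finite_all_edges: "finite (all_edges n)"
  unfolding all_edges_eq by (rule finite_subset[of _ "Pow {1..n}"]) auto

lemma doubleton_in_all_edges_iff:
  "{u, v} \<in> all_edges n \<longleftrightarrow> u \<in> {1..n} \<and> v \<in> {1..n} \<and> u \<noteq> v"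
  by (auto simp: all_edges_def doubleton_eq_iff)

lemma set_pmf_Gnp_subset: "E \<in> set_pmf (Gnp n p) \<Longrightarrow> E \<subseteq> all_edges n"
  by (auto simp: Gnp_def)

lemma prob_Gnp_contains_avoids:
  assumes F: "F \<subseteq> all_edges n" and Z: "Z \<subseteq> all_edges n" and FZ: "F \<inter> Z = {}"
    and p: "0 \<le> p" "p \<le> 1"
  shows "measure_pmf.prob (Gnp n p) {E. F \<subseteq> E \<and> E \<inter> Z = {}} = p ^ card F * (1 - p) ^ card Z"
proof -
  define B where "B = (\<lambda>e. if e \<in> F then {True} else if e \<in> Z then {False} else (UNIV::bool set))"
  define q where "q = (\<lambda>e. measure_pmf.prob (bernoulli_pmf p) (B e))"
  have fin: "finite (all_edges n)" by (rule finite_all_edges)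
  have "(\<lambda>f. {e \<in> all_edges n. f e}) -` {E. F \<subseteq> E \<and> E \<inter> Z = {}} = Pi (all_edges n) B"
    using F Z FZ unfolding B_def Pi_def by auto
  then have "measure_pmf.prob (Gnp n p) {E. F \<subseteq> E \<and> E \<inter> Z = {}}
     = measure_pmf.prob (Pi_pmf (all_edges n) False (\<lambda>_. bernoulli_pmf p)) (Pi (all_edges n) B)"
    unfolding Gnp_def by simp
  also have "\<dots> = (\<Prod>e\<in>all_edges n. q e)"
    unfolding q_def by (rule measure_Pi_pmf_Pi[OF fin])
  also have "\<dots> = (\<Prod>e\<in>F \<union> Z. q e) * (\<Prod>e\<in>all_edges n - (F \<union> Z). q e)"
    using fin F Z by (subst prod.subset_diff[of "F \<union> Z"]) (auto simp: mult.commute)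
  also have "(\<Prod>e\<in>F \<union> Z. q e) = (\<Prod>e\<in>F. q e) * (\<Prod>e\<in>Z. q e)"
    using fin F Z FZ by (intro prod.union_disjoint) (auto intro: finite_subset)
  also have "(\<Prod>e\<in>F. q e) = p ^ card F"
    using p by (simp add: q_def B_def measure_pmf_single)
  also have "(\<Prod>e\<in>Z. q e) = (1 - p) ^ card Z"
    using p FZ by (subst prod.cong[OF refl, where h = "\<lambda>_. 1 - p"]) (auto simp: q_def B_def measure_pmf_single)
  also have "(\<Prod>e\<in>all_edges n - (F \<union> Z). q e) = 1"
    by (intro prod.neutral) (simp add: q_def B_def)
  finally show ?thesis by simp
qed

definition edges_meeting :: "nat \<Rightarrow> nat set \<Rightarrow> nat set set" where
  "edges_meeting n W = {e \<in> all_edges n. e \<inter> W \<noteq> {}}"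

lemma card_edges_meeting:
  assumes W: "W \<subseteq> {1..n}"
  shows "real (card (edges_meeting n W))
    = real (card W) * real n - real (card W) ^ 2 / 2 - real (card W) / 2"
proof -
  define w where "w = card W"
  define outside where "outside = {e. e \<subseteq> {1..n} - W \<and> card e = 2}"
  have finW: "finite W" using W finite_subset by blast
  have wn: "w \<le> n" unfolding w_def using card_mono[OF _ W] by simp
  have real_choose_2: "real (a choose 2) = real a * (real a - 1) / 2" for a
    by (simp add: binomial_gbinomial gbinomial_pochhammer' numeral_2_eq_2 pochhammer_Suc)
  have "edges_meeting n W = all_edges n - outside"
    unfolding edges_meeting_def outside_def all_edges_eq by auto
  moreover have "outside \<subseteq> all_edges n" unfolding outside_def all_edges_eq by auto
  moreover have "card (all_edges n) = n choose 2"
    using n_subsets[of "{1..n}" 2] by (simp add: all_edges_eq)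
  moreover have "card outside = (n - w) choose 2"
    using n_subsets[of "{1..n} - W" 2] W finW by (simp add: outside_def card_Diff_subset w_def)
  moreover have "card outside \<le> card (all_edges n)"
    using \<open>outside \<subseteq> all_edges n\<close> by (rule card_mono[OF finite_all_edges])
  ultimately have "real (card (edges_meeting n W)) = real (n choose 2) - real ((n - w) choose 2)"
    by (simp add: card_Diff_subset finite_subset[OF _ finite_all_edges] of_nat_diff)
  also have "\<dots> = real w * real n - real w ^ 2 / 2 - real w / 2"
    using wn by (simp add: real_choose_2 of_nat_diff power2_eq_square field_simps)
  finally show ?thesis by (simp add: w_def)
qed

section \<open>Analytic estimates\<close>

lemma ln_one_minus_le:
  fixes t :: real assumes "0 \<le> t" "t < 1"
  shows "ln (1 - t) \<le> - t - t^2/2"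
proof -
  define g where "g s = ln (1 - s) + s + s^2/2" for s :: real
  have "g t \<le> g 0"
  proof (rule DERIV_nonpos_imp_nonincreasing[OF assms(1)])
    fix x assume x: "0 \<le> x" "x \<le> t"
    then have x1: "x < 1" using assms by simp
    have "DERIV g x :> (- 1 / (1 - x) + 1 + x)"
      unfolding g_def using x1 by - (rule derivative_eq_intros refl | simp)+
    moreover have "- 1 / (1 - x) + 1 + x = - (x^2) / (1 - x)"
      using x1 by (simp add: field_simps power2_eq_square)
    moreover have "- (x^2) / (1 - x) \<le> 0" using x1 by (simp add: divide_nonpos_pos)
    ultimately show "\<exists>y. DERIV g x :> y \<and> y \<le> 0" by auto
  qed
  then show ?thesis by (simp add: g_def)
qed

lemma ln_two_le: "ln (2::real) \<le> 23/24"
proof -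
  have "(2::real) \<le> (1 + 23/48)^2" by (simp add: power2_eq_square)
  also have "\<dots> \<le> exp (23/48) ^ 2" by (intro power_mono exp_ge_add_one_self) auto
  also have "\<dots> = exp (23/24)" by (simp add: power2_eq_square flip: exp_add)
  finally show ?thesis by (metis exp_gt_zero ln_exp ln_le_cancel_iff zero_less_numeral)
qed

definition ln_gap :: "real \<Rightarrow> real" where "ln_gap t = t - 1 - ln t"

lemma ln_gap_nonneg: "0 < t \<Longrightarrow> 0 \<le> ln_gap t"
  using ln_le_minus_one[of t] by (simp add: ln_gap_def)

lemma ln_gap_mono: assumes "1 \<le> a" "a \<le> b" shows "ln_gap a \<le> ln_gap b"
proof -
  have "ln (b / a) \<le> b / a - 1" using assms by (intro ln_le_minus_one) auto
  also have "b / a - 1 = (b - a) / a" using assms by (simp add: field_simps)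
  also have "\<dots> \<le> b - a" using assms by (simp add: divide_le_eq mult_le_cancel_left1)
  finally have "ln b - ln a \<le> b - a" using assms by (simp add: ln_div)
  then show ?thesis by (simp add: ln_gap_def)
qed

lemma ln_gap_pos: assumes "1 < t" shows "0 < ln_gap t"
proof -
  have "ln t = 2 * ln (sqrt t)" using assms by (simp add: ln_sqrt)
  also have "\<dots> \<le> 2 * (sqrt t - 1)" using ln_le_minus_one[of "sqrt t"] assms by simp
  also have "\<dots> < t - 1"
  proof -
    have "0 < (sqrt t - 1)^2" using assms by simp
    then show ?thesis using assms by (simp add: power2_eq_square algebra_simps)
  qed
  finally show ?thesis by (simp add: ln_gap_def)
qed

text \<open>The part of the exponent \<open>x ln c - c x (1 - x/2) - (1 - x) ln (1 - x)\<close> of the expected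
  number of isolated trees on \<open>x n\<close> vertices that does not involve \<open>c\<close>; the rest is
  \<open>- x \<cdot> ln_gap (c (1 - x/2))\<close>.\<close>

definition entropy_remainder :: "real \<Rightarrow> real" where
  "entropy_remainder y = - y - y * ln (1 - y/2) - (1 - y) * ln (1 - y)"

lemma entropy_remainder_le_below_one:
  fixes x :: real assumes "0 \<le> x" "x < 1"
  shows "entropy_remainder x \<le> - (x^3/24)"
proof -
  define G where "G y = entropy_remainder y + y^3/24" for y
  have "G x \<le> G 0"
  proof (rule DERIV_nonpos_imp_nonincreasing[OF assms(1)])
    fix y assume y: "0 \<le> y" "y \<le> x"
    then have y1: "y < 1" using assms by simp
    define t where "t = y / (2 - y)"
    have t: "0 \<le> t" "t < 1" "y/2 \<le> t" using y y1 by (auto simp: t_def field_simps)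
    have "DERIV G y :> (y / (2 - y) + ln (1 - y) - ln (1 - y / 2) + y^2 / 8)"
      unfolding G_def entropy_remainder_def using y1 by - (rule derivative_eq_intros refl | simp)+
    moreover have "y / (2 - y) + ln (1 - y) - ln (1 - y / 2) + y^2 / 8 \<le> 0"
    proof -
      have "1 - t = (1 - y) / (1 - y/2)" using y1 by (simp add: t_def field_simps)
      then have "ln (1 - t) = ln (1 - y) - ln (1 - y/2)" using y1 by (simp add: ln_div)
      then have "y / (2 - y) + ln (1 - y) - ln (1 - y / 2) + y^2 / 8 = ln (1 - t) + t + y^2/8"
        by (simp add: t_def)
      also have "\<dots> \<le> - (t^2/2) + y^2/8" using ln_one_minus_le[OF t(1,2)] by simp
      also have "\<dots> \<le> 0"
        using power_mono[OF t(3), of 2] y by (simp add: power2_eq_square field_simps)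
      finally show ?thesis .
    qed
    ultimately show "\<exists>d. DERIV G y :> d \<and> d \<le> 0" by blast
  qed
  then show ?thesis by (simp add: G_def entropy_remainder_def)
qed

lemma entropy_remainder_le:
  fixes x :: real assumes "0 \<le> x" "x \<le> 1"
  shows "entropy_remainder x \<le> - (x^3/24)"
proof (cases "x < 1")
  case True then show ?thesis using entropy_remainder_le_below_one assms by simp
next
  case False
  then have "x = 1" using assms by simp
  then show ?thesis using ln_two_le by (simp add: entropy_remainder_def ln_div)
qed

definition decay_rate :: "real \<Rightarrow> real" where
  "decay_rate c1 = min (ln_gap ((c1 + 1)/2)) ((1 - 1/c1)^2/24)"

lemma decay_rate_pos: "1 < c1 \<Longrightarrow> 0 < decay_rate c1"
  unfolding decay_rate_def using ln_gap_pos[of "(c1+1)/2"] by (auto simp: field_simps)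

lemma decay_rate_le: assumes "1 < c1" shows "decay_rate c1 \<le> 1/24"
proof -
  have "(1 - 1/c1)^2 \<le> 1" using assms by (intro power_le_one) (auto simp: field_simps)
  then show ?thesis unfolding decay_rate_def by simp
qed

lemma tree_exponent_le:
  fixes x c c1 :: real
  assumes c: "1 < c1" "c1 \<le> c" and x: "0 < x" "x \<le> 1"
  shows "x * ln c - c * x * (1 - x/2) - (1 - x) * ln (1 - x) \<le> - (decay_rate c1 * x)"
proof -
  define u where "u = 1 - x/2"
  have u: "1/2 \<le> u" "u < 1" using x by (auto simp: u_def)
  have cu: "0 < c * u" using u c by simp
  have "ln (c * u) = ln c + ln u" using c u by (simp add: ln_mult)
  then have eq: "x * ln c - c * x * (1 - x/2) - (1 - x) * ln (1 - x)
      = entropy_remainder x - x * ln_gap (c * u)"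
    unfolding entropy_remainder_def ln_gap_def u_def by (simp add: algebra_simps)
  have rem: "entropy_remainder x \<le> - (x^3/24)" using entropy_remainder_le x by simp
  moreover have "0 \<le> x^3" using x by simp
  ultimately have rem0: "entropy_remainder x \<le> 0" by linarith
  show ?thesis
  proof (cases "x \<le> 1 - 1/c1")
    case True
    have "(c1 + 1)/2 = c1 * (1 - (1 - 1/c1)/2)" using c by (simp add: field_simps)
    also have "\<dots> \<le> c * u" using True c u unfolding u_def by (intro mult_mono) (auto simp: field_simps)
    finally have "ln_gap ((c1 + 1)/2) \<le> ln_gap (c * u)" using c by (intro ln_gap_mono) auto
    then have "decay_rate c1 \<le> ln_gap (c * u)" unfolding decay_rate_def by simp
    then have "x * decay_rate c1 \<le> x * ln_gap (c * u)" using x by (intro mult_left_mono) auto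
    then show ?thesis unfolding eq using rem0 by (simp add: mult.commute)
  next
    case False
    have "(1 - 1/c1)^2 \<le> x^2" using False c by (intro power_mono) (auto simp: field_simps)
    then have "x * ((1 - 1/c1)^2/24) \<le> x^3/24"
      using x by (simp add: power3_eq_cube power2_eq_square mult_left_mono)
    then have "x * decay_rate c1 \<le> x^3/24"
      unfolding decay_rate_def using x by (smt (verit) min.cobounded2 mult_left_mono)
    moreover have "0 \<le> x * ln_gap (c * u)" using ln_gap_nonneg[OF cu] x by simp
    ultimately show ?thesis using eq rem by (simp add: algebra_simps)
  qed
qed

lemma binomial_power_le_exp:
  fixes n m :: nat assumes "0 < m" "m \<le> n"
  shows "real (n choose m) * (real m / real n) ^ m \<le> exp (- (real (n - m) * ln (1 - real m / real n)))"
proof (cases "m = n")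
  case True then show ?thesis using assms by simp
next
  case False
  define x where "x = real m / real n"
  have x: "0 < x" "x < 1" using assms False by (auto simp: x_def field_simps)
  have "real (n choose m) * x ^ m * (1 - x) ^ (n - m) \<le> (\<Sum>k\<le>n. real (n choose k) * x ^ k * (1 - x) ^ (n - k))"
    using assms x by (intro member_le_sum) auto
  also have "\<dots> = 1"
    using binomial_ring[of x "1 - x" n] by simp
  finally have "real (n choose m) * x ^ m * (1 - x) ^ (n - m) \<le> 1" .
  moreover have "(1 - x) ^ (n - m) = exp (real (n - m) * ln (1 - x))"
    using x by (simp add: exp_of_nat_mult)
  ultimately have "real (n choose m) * x ^ m \<le> 1 / exp (real (n - m) * ln (1 - x))"
    by (simp add: field_simps)
  then show ?thesis by (simp add: x_def exp_minus inverse_eq_divide)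
qed

lemma neg_mult_ln_le_sqrt: assumes "0 < t" shows "- (t * ln t) \<le> 2 * sqrt t"
proof -
  have "ln (1 / sqrt t) \<le> 1 / sqrt t - 1" using assms by (intro ln_le_minus_one) simp
  moreover have "ln (1 / sqrt t) = - ln t / 2" using assms by (simp add: ln_div ln_sqrt)
  ultimately have "- ln t \<le> 2 / sqrt t" by simp
  then have "t * (- ln t) \<le> t * (2 / sqrt t)" using assms by (intro mult_left_mono) auto
  also have "t * (2 / sqrt t) = 2 * sqrt t" using assms
    by (metis divide_inverse mult.commute mult.left_commute real_div_sqrt order_less_le)
  finally show ?thesis by simp
qed

lemma sum_binomial_small_le:
  fixes th :: real assumes th: "0 < th" "th \<le> 1"
  shows "(\<Sum>a | a \<le> m \<and> real a \<le> th * real m. real (m choose a)) \<le> exp (real m * (th + 2 * sqrt th))"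
proof -
  define I where "I = {a. a \<le> m \<and> real a \<le> th * real m}"
  define z where "z = exp (th * m * ln th)"
  have z: "0 < z" by (simp add: z_def)
  have "(\<Sum>a\<in>I. real (m choose a)) \<le> (\<Sum>a\<in>I. real (m choose a) * th ^ a / z)"
  proof (intro sum_mono)
    fix a assume a: "a \<in> I"
    have "(th * m) * ln th \<le> a * ln th" using a th by (intro mult_right_mono_neg) (auto simp: I_def)
    then have "z \<le> exp (a * ln th)" by (simp add: z_def)
    also have "exp (a * ln th) = th ^ a" using th by (simp add: exp_of_nat_mult)
    finally have "z * real (m choose a) \<le> th ^ a * real (m choose a)"
      by (rule mult_right_mono) simp
    then show "real (m choose a) \<le> real (m choose a) * th ^ a / z"
      using z by (simp add: field_simps)
  qed
  also have "\<dots> \<le> (\<Sum>a\<le>m. real (m choose a) * th ^ a * 1 ^ (m - a)) / z"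
    using th z by (simp add: sum_divide_distrib) (intro sum_mono2, auto simp: I_def)
  also have "\<dots> = (th + 1) ^ m / z" by (simp add: binomial_ring)
  also have "\<dots> \<le> exp th ^ m / z"
    using th z by (intro divide_right_mono power_mono) (auto simp: add.commute)
  also have "\<dots> = exp (m * th - m * (th * ln th))"
    by (simp add: z_def exp_of_nat_mult[symmetric] exp_diff algebra_simps)
  also have "\<dots> \<le> exp (m * th + m * (2 * sqrt th))"
    using mult_left_mono[OF neg_mult_ln_le_sqrt[OF th(1)], of "real m"] by simp
  finally show ?thesis by (simp add: I_def algebra_simps)
qed

lemma card_small_subsets_le:
  fixes X :: "'a set" and th :: real
  assumes fin: "finite X" and th: "0 < th" "th \<le> 1"
  shows "real (card {D. D \<subseteq> X \<and> real (card D) \<le> th * real (card X)})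
    \<le> exp (real (card X) * (th + 2 * sqrt th))"
proof -
  define m where "m = card X"
  define I where "I = {a. a \<le> m \<and> real a \<le> th * real m}"
  have "{D. D \<subseteq> X \<and> real (card D) \<le> th * real m} \<subseteq> (\<Union>a\<in>I. {D. D \<subseteq> X \<and> card D = a})"
    using fin by (auto simp: I_def m_def intro: card_mono)
  then have "card {D. D \<subseteq> X \<and> real (card D) \<le> th * real m} \<le> card (\<Union>a\<in>I. {D. D \<subseteq> X \<and> card D = a})"
    using fin by (intro card_mono) (auto simp: I_def)
  also have "\<dots> \<le> (\<Sum>a\<in>I. card {D. D \<subseteq> X \<and> card D = a})" by (rule card_UN_le) (simp add: I_def)
  also have "\<dots> = (\<Sum>a\<in>I. m choose a)" using fin by (simp add: n_subsets m_def)
  finally have "real (card {D. D \<subseteq> X \<and> real (card D) \<le> th * real m}) \<le> (\<Sum>a\<in>I. real (m choose a))"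
    by (metis of_nat_le_iff of_nat_sum)
  also have "\<dots> \<le> exp (real m * (th + 2 * sqrt th))"
    unfolding I_def by (rule sum_binomial_small_le[OF th])
  finally show ?thesis by (simp add: m_def)
qed

text \<open>Lower bound on the number of pairs that meet \<open>X - D\<close> but are not edges of a spanning
  tree of \<open>X\<close>, when \<open>card X = m\<close> and \<open>card D \<le> th m\<close>.\<close>

definition absent_pairs_bound :: "nat \<Rightarrow> real \<Rightarrow> nat \<Rightarrow> real" where
  "absent_pairs_bound n th m = real m * n - real m^2/2 - real m/2 - th * m * n - m"

lemma tree_count_exponent_le:
  fixes n m :: nat and c c1 :: real
  assumes m: "1 \<le> m" "m \<le> n" and c: "1 < c1" "c1 \<le> c"
  shows "m * ln c - c * m + c * m * (m / n) / 2 - real (n - m) * ln (1 - m / n) \<le> - (decay_rate c1 * m)"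
proof -
  define x where "x = real m / real n"
  have n0: "0 < real n" using m by simp
  have x: "0 < x" "x \<le> 1" using m by (auto simp: x_def field_simps)
  have nx: "n * x = m" using n0 by (simp add: x_def)
  have n1x: "n * (1 - x) = real (n - m)" using nx m by (simp add: of_nat_diff right_diff_distrib)
  have "m * ln c - c * m + c * m * x / 2 - real (n - m) * ln (1 - x)
      = n * (x * ln c - c * x * (1 - x/2) - (1 - x) * ln (1 - x))"
    unfolding nx[symmetric] n1x[symmetric] by (simp add: algebra_simps)
  also have "\<dots> \<le> n * (- (decay_rate c1 * x))"
    using tree_exponent_le[OF c x] n0 by (intro mult_left_mono) auto
  also have "\<dots> = - (decay_rate c1 * m)" using nx by (simp add: algebra_simps)
  finally show ?thesis by (simp add: x_def)
qed

lemma tree_term_eq: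
  fixes n m :: nat and c th :: real
  assumes m: "1 \<le> m" "m \<le> n" and c: "0 < c"
  defines "x \<equiv> real m / real n"
  shows "real (n choose m) * exp (m * (th + 2 * sqrt th)) * real m ^ m * (c / n) ^ (m - 1)
          * exp (- (c / n) * absent_pairs_bound n th m)
    = (n / c) * (real (n choose m) * x ^ m) * exp (m * (th + 2 * sqrt th) + m * ln c
          + (- (c * m) + c * m * x / 2 + c * th * m + (c * x / 2 + c * x)))"
proof -
  define a where "a = m * (th + 2 * sqrt th)"
  define E' where "E' = - (c * m) + c * m * x / 2 + c * th * m + (c * x / 2 + c * x)"
  have n0: "0 < real n" using m by simp
  have "real m ^ m * (c / n) ^ (m - 1) * (c / n) = real m ^ m * (c / n) ^ m"
    using m by (cases m) (simp_all add: power_Suc2 mult.assoc)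
  also have "\<dots> = c ^ m * x ^ m" by (simp add: x_def power_divide field_simps)
  also have "c ^ m = exp (m * ln c)" using c by (simp add: exp_of_nat_mult)
  finally have power_eq: "real m ^ m * (c / n) ^ (m - 1) = (n / c) * (exp (m * ln c) * x ^ m)"
    using n0 c by (simp add: field_simps)
  have exp_eq: "- (c / n) * absent_pairs_bound n th m = E'"
    using n0 by (simp add: E'_def absent_pairs_bound_def x_def field_simps power2_eq_square)
  have "real (n choose m) * exp a * real m ^ m * (c / n) ^ (m - 1)
          * exp (- (c / n) * absent_pairs_bound n th m)
      = real (n choose m) * exp a * (real m ^ m * (c / n) ^ (m - 1)) * exp E'"
    by (simp only: mult.assoc exp_eq)
  also have "\<dots> = (n / c) * (real (n choose m) * x ^ m) * (exp a * exp (m * ln c) * exp E')"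
    unfolding power_eq by (simp only: mult_ac)
  also have "\<dots> = (n / c) * (real (n choose m) * x ^ m) * exp (a + m * ln c + E')"
    by (simp only: exp_add)
  finally show ?thesis unfolding a_def E'_def .
qed

lemma tree_term_le:
  fixes n m :: nat and c c1 th :: real
  assumes m: "1 \<le> m" "m \<le> n" and c: "1 < c1" "c1 \<le> c"
  shows "real (n choose m) * exp (m * (th + 2 * sqrt th)) * real m ^ m * (c / n) ^ (m - 1)
          * exp (- (c / n) * absent_pairs_bound n th m)
        \<le> (n / c) * exp (2 * c) * exp (m * (th + 2 * sqrt th + c * th - decay_rate c1))"
proof -
  define x where "x = real m / real n"
  define a where "a = m * (th + 2 * sqrt th)"
  define L where "L = m * ln c - c * m + c * m * x / 2 - real (n - m) * ln (1 - x)"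
  have n0: "0 < real n" and cpos: "0 < c" using m c by auto
  have x: "0 < x" "x \<le> 1" using m by (auto simp: x_def field_simps)
  have binom: "real (n choose m) * x ^ m \<le> exp (- (real (n - m) * ln (1 - x)))"
    using binomial_power_le_exp[of m n] m by (simp add: x_def)
  have "L \<le> - (decay_rate c1 * m)"
    using tree_count_exponent_le[OF m c] by (simp add: L_def x_def)
  moreover have "c * x / 2 + c * x \<le> 2 * c" using x cpos mult_left_le[of x c] by linarith
  moreover have "m * (th + 2 * sqrt th + c * th - decay_rate c1) = a + c * th * m - decay_rate c1 * m"
    by (simp add: a_def algebra_simps)
  ultimately have exponent: "a + m * ln c + (- (c * m) + c * m * x / 2 + c * th * m + (c * x / 2 + c * x))
      - real (n - m) * ln (1 - x) \<le> 2 * c + m * (th + 2 * sqrt th + c * th - decay_rate c1)"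
    unfolding L_def by linarith
  have "real (n choose m) * exp (m * (th + 2 * sqrt th)) * real m ^ m * (c / n) ^ (m - 1)
          * exp (- (c / n) * absent_pairs_bound n th m)
    = (n / c) * (real (n choose m) * x ^ m)
        * exp (a + m * ln c + (- (c * m) + c * m * x / 2 + c * th * m + (c * x / 2 + c * x)))"
    unfolding tree_term_eq[OF m cpos] x_def a_def ..
  also have "\<dots> \<le> (n / c) * exp (- (real (n - m) * ln (1 - x)))
        * exp (a + m * ln c + (- (c * m) + c * m * x / 2 + c * th * m + (c * x / 2 + c * x)))"
    using binom n0 cpos by (intro mult_right_mono mult_left_mono) auto
  also have "\<dots> \<le> (n / c) * exp (2 * c + m * (th + 2 * sqrt th + c * th - decay_rate c1))"
    using exponent n0 cpos by (simp only: mult.assoc exp_add[symmetric]) (intro mult_left_mono, auto)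
  finally show ?thesis by (simp add: exp_add mult.assoc)
qed

definition tree_edges :: "nat set \<Rightarrow> nat \<Rightarrow> (nat \<Rightarrow> nat) \<Rightarrow> nat set set" where
  "tree_edges X r par = (\<lambda>v. {v, par v}) ` (X - {r})"

definition parent_maps :: "nat \<Rightarrow> nat set \<Rightarrow> nat \<Rightarrow> (nat \<Rightarrow> nat) set" where
  "parent_maps n X r = {par \<in> (X - {r}) \<rightarrow>\<^sub>E X.
     inj_on (\<lambda>v. {v, par v}) (X - {r}) \<and> tree_edges X r par \<subseteq> all_edges n}"

definition tree_event :: "nat \<Rightarrow> nat set \<Rightarrow> nat set \<Rightarrow> nat \<Rightarrow> (nat \<Rightarrow> nat) \<Rightarrow> nat set set set" where
  "tree_event n X D r par =
     {E. tree_edges X r par \<subseteq> E \<and> E \<inter> (edges_meeting n (X - D) - tree_edges X r par) = {}}"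

lemma card_parent_maps_le:
  assumes "finite X" "r \<in> X"
  shows "card (parent_maps n X r) \<le> card X ^ (card X - 1)"
proof -
  have "card (parent_maps n X r) \<le> card ((X - {r}) \<rightarrow>\<^sub>E X)"
    using assms by (intro card_mono finite_PiE) (auto simp: parent_maps_def)
  also have "\<dots> = card X ^ (card X - 1)" using assms by (simp add: card_PiE card_Diff_singleton)
  finally show ?thesis .
qed

lemma finite_parent_maps: "finite X \<Longrightarrow> finite (parent_maps n X r)"
  by (rule finite_subset[of _ "(X - {r}) \<rightarrow>\<^sub>E X"]) (auto simp: parent_maps_def intro: finite_PiE)

lemma prob_tree_event_le:
  assumes X: "X \<subseteq> {1..n}" and D: "D \<subseteq> X" and r: "r \<in> X" and par: "par \<in> parent_maps n X r"
    and cD: "real (card D) \<le> th * real (card X)" and p: "0 \<le> p" "p \<le> 1"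
  shows "measure_pmf.prob (Gnp n p) (tree_event n X D r par)
    \<le> p ^ (card X - 1) * exp (- p * absent_pairs_bound n th (card X))"
proof -
  define m where "m = card X"
  define w where "w = card (X - D)"
  define T where "T = tree_edges X r par"
  define Z where "Z = edges_meeting n (X - D) - T"
  have finX: "finite X" using X finite_subset by blast
  have T: "T \<subseteq> all_edges n" "card T = m - 1"
    using par r finX by (auto simp: T_def parent_maps_def tree_edges_def card_image m_def)
  have Z: "Z \<subseteq> all_edges n" "T \<inter> Z = {}" by (auto simp: Z_def edges_meeting_def)
  have "real (card (edges_meeting n (X - D))) \<le> real (card Z) + real (card T)"
    using card_Un_le[of Z T] card_mono[of "Z \<union> T" "edges_meeting n (X - D)"] T Z finite_all_edges
    by (simp add: Z_def) (smt (verit, ccfv_SIG) Un_Diff_cancel2 finite_Un finite_subset of_nat_add of_nat_mono sup.orderE)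
  moreover have "X - D \<subseteq> {1..n}" using X by auto
  then have "real (card (edges_meeting n (X - D))) = real w * n - real w ^ 2 / 2 - real w / 2"
    unfolding w_def by (rule card_edges_meeting)
  moreover have "real m - real w \<le> th * m" "real w \<le> real m"
    using D finX cD by (auto simp: w_def m_def card_Diff_subset finite_subset card_mono of_nat_diff)
  moreover have "real w ^ 2 \<le> real m ^ 2" using \<open>real w \<le> real m\<close> by (simp add: power_mono)
  moreover have "(real m - real w) * n \<le> th * m * n" using \<open>real m - real w \<le> th * m\<close>
    by (simp add: mult_right_mono)
  then have "real m * n - real w * n \<le> th * m * n" by (simp add: left_diff_distrib)
  moreover have "real (card T) \<le> real m" using T by simp
  ultimately have Z_large: "absent_pairs_bound n th m \<le> real (card Z)"
    unfolding absent_pairs_bound_def by linarith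
  have "measure_pmf.prob (Gnp n p) (tree_event n X D r par) = p ^ (m - 1) * (1 - p) ^ card Z"
    using prob_Gnp_contains_avoids[OF T(1) Z p] T by (simp add: tree_event_def T_def Z_def)
  also have "\<dots> \<le> p ^ (m - 1) * exp (- p) ^ card Z"
    using p by (intro mult_left_mono power_mono) (auto simp: exp_ge_add_one_self[of "-p", simplified])
  also have "\<dots> \<le> p ^ (m - 1) * exp (- p * absent_pairs_bound n th m)"
    using Z_large p by (intro mult_left_mono) (auto simp: exp_of_nat_mult[symmetric] mult.commute mult_left_mono)
  finally show ?thesis by (simp add: m_def)
qed

section \<open>Breadth-first spanning trees\<close>

lemma adj_sym: "(a, b) \<in> adj E Q \<Longrightarrow> (b, a) \<in> adj E Q"
  by (auto simp: adj_def insert_commute)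

lemma rtrancl_adj_sym: "(a, b) \<in> (adj E Q)\<^sup>* \<Longrightarrow> (b, a) \<in> (adj E Q)\<^sup>*"
proof -
  have "(adj E Q)\<inverse> = adj E Q" using adj_sym by auto
  then show "(a, b) \<in> (adj E Q)\<^sup>* \<Longrightarrow> (b, a) \<in> (adj E Q)\<^sup>*" by (metis rtrancl_converseI)
qed

lemma adj_mono: "Q \<subseteq> Q' \<Longrightarrow> adj E Q \<subseteq> adj E Q'"
  by (auto simp: adj_def)

definition bfs_parent :: "nat set set \<Rightarrow> nat set \<Rightarrow> nat \<Rightarrow> (nat \<Rightarrow> nat) \<Rightarrow> (nat \<Rightarrow> nat) \<Rightarrow> bool" where
  "bfs_parent E X r depth par \<longleftrightarrow>
     (\<forall>z\<in>X. (r, z) \<in> adj E X ^^ depth z \<and> (\<forall>k. (r, z) \<in> adj E X ^^ k \<longrightarrow> depth z \<le> k)) \<and>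
     (\<forall>z\<in>X - {r}. (par z, z) \<in> adj E X \<and> depth (par z) < depth z)"

lemma bfs_parent_exists:
  assumes conn: "\<forall>z\<in>X. (r, z) \<in> (adj E X)\<^sup>*"
  shows "\<exists>depth par. bfs_parent E X r depth par"
proof -
  define depth where "depth z = (LEAST k. (r, z) \<in> adj E X ^^ k)" for z
  have walk: "(r, z) \<in> adj E X ^^ depth z" if "z \<in> X" for z
  proof -
    have "(r, z) \<in> (adj E X)\<^sup>*" using conn that by blast
    then obtain k where "(r, z) \<in> adj E X ^^ k" by (auto simp: rtrancl_power)
    then show ?thesis unfolding depth_def by (rule LeastI)
  qed
  have shortest: "depth z \<le> k" if "(r, z) \<in> adj E X ^^ k" for z k
    unfolding depth_def using that by (rule Least_le)
  have "\<exists>u. (r, u) \<in> adj E X ^^ (depth z - 1) \<and> (u, z) \<in> adj E X \<and> depth u < depth z"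
    if z: "z \<in> X - {r}" for z
  proof -
    obtain k where k: "depth z = Suc k"
      using walk[of z] z by (cases "depth z") auto
    then obtain u where "(r, u) \<in> adj E X ^^ k" "(u, z) \<in> adj E X" using walk[of z] z by auto
    then show ?thesis using k shortest[of u k] by auto
  qed
  then obtain par where "\<forall>z\<in>X - {r}. (par z, z) \<in> adj E X \<and> depth (par z) < depth z"
    by metis
  then show ?thesis using walk shortest unfolding bfs_parent_def by blast
qed

lemma bfs_parent_edge:
  assumes "bfs_parent E X r depth par" "v \<in> X - {r}"
  shows "par v \<in> X" "par v \<noteq> v" "{v, par v} \<in> E"
proof -
  have "(par v, v) \<in> adj E X" "depth (par v) < depth v"
    using assms by (auto simp: bfs_parent_def)
  then show "par v \<in> X" "par v \<noteq> v" "{v, par v} \<in> E" by (auto simp: adj_def insert_commute)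
qed

lemma bfs_parent_inj:
  assumes "bfs_parent E X r depth par"
  shows "inj_on (\<lambda>v. {v, par v}) (X - {r})"
proof (rule inj_onI)
  fix u v assume u: "u \<in> X - {r}" and v: "v \<in> X - {r}" and eq: "{u, par u} = {v, par v}"
  have "depth (par u) < depth u" "depth (par v) < depth v" using assms u v by (auto simp: bfs_parent_def)
  moreover from eq have "(u = v \<and> par u = par v) \<or> (u = par v \<and> par u = v)"
    by (auto simp: doubleton_eq_iff)
  ultimately show "u = v" by auto
qed

section \<open>The pendant forest outside the core\<close>

locale component_core =
  fixes n :: nat and E :: "nat set set" and H :: "nat set"
  assumes edges_valid: "E \<subseteq> all_edges n"
    and component_H: "H \<in> components E {1..n}"
begin

definition "C = core E H"
definition "P = H - C"

lemma H_subset: "H \<subseteq> {1..n}"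
  using component_H by (auto simp: components_def component_def)

lemma finite_H: "finite H" using H_subset finite_subset by blast

lemma edge_ends: "{u, y} \<in> E \<Longrightarrow> u \<in> {1..n} \<and> y \<in> {1..n} \<and> u \<noteq> y"
  using edges_valid doubleton_in_all_edges_iff by blast

lemma H_closed: assumes "u \<in> H" "{u, y} \<in> E" shows "y \<in> H"
proof -
  obtain v where v: "H = component E {1..n} v" using component_H by (auto simp: components_def)
  have "(v, u) \<in> (adj E {1..n})\<^sup>*" using assms v by (auto simp: component_def)
  moreover have "(u, y) \<in> adj E {1..n}" using assms edge_ends by (auto simp: adj_def)
  ultimately have "(v, y) \<in> (adj E {1..n})\<^sup>*" by simp
  then show ?thesis using v edge_ends[OF assms(2)] by (auto simp: component_def)
qed

lemma C_subset: "C \<subseteq> H" unfolding C_def core_def by auto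

lemma finite_C: "finite C" using C_subset finite_H finite_subset by blast

lemma finite_P: "finite P" using finite_H by (simp add: P_def)

lemma P_C_disjoint: "P \<inter> C = {}" by (auto simp: P_def)

lemma two_le_card_core_nbrs: assumes "v \<in> C" shows "2 \<le> card {u \<in> C. {u, v} \<in> E}"
proof -
  obtain W where W: "W \<subseteq> H" "\<forall>v\<in>W. 2 \<le> card {u \<in> W. {u, v} \<in> E}" "v \<in> W"
    using assms unfolding C_def core_def by auto
  have "W \<subseteq> C" using W unfolding C_def core_def by auto
  then have "card {u \<in> W. {u, v} \<in> E} \<le> card {u \<in> C. {u, v} \<in> E}"
    using finite_C by (intro card_mono) auto
  then show ?thesis using W by auto
qed

lemma subset_C: "W \<subseteq> H \<Longrightarrow> \<forall>v\<in>W. 2 \<le> card {u \<in> W. {u, v} \<in> E} \<Longrightarrow> W \<subseteq> C"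
  unfolding C_def core_def by auto

lemma exists_low_degree:
  assumes Y: "Y \<subseteq> P" "Y \<noteq> {}"
  shows "\<exists>v\<in>Y. card {u \<in> Y \<union> C. {u, v} \<in> E} < 2"
proof (rule ccontr)
  assume "\<not> ?thesis"
  then have Y_deg: "\<forall>v\<in>Y. 2 \<le> card {u \<in> Y \<union> C. {u, v} \<in> E}" by auto
  have fin: "finite (Y \<union> C)" using Y finite_C finite_P by (auto intro: finite_subset)
  have "2 \<le> card {u \<in> Y \<union> C. {u, v} \<in> E}" if v: "v \<in> Y \<union> C" for v
  proof (cases "v \<in> Y")
    case False
    then have "2 \<le> card {u \<in> C. {u, v} \<in> E}" using v two_le_card_core_nbrs by auto
    also have "\<dots> \<le> card {u \<in> Y \<union> C. {u, v} \<in> E}" using fin by (intro card_mono) auto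
    finally show ?thesis .
  qed (use Y_deg in auto)
  moreover have "Y \<union> C \<subseteq> H" using Y C_subset by (auto simp: P_def)
  ultimately have "Y \<union> C \<subseteq> C" by (intro subset_C) auto
  then show False using Y by (auto simp: P_def)
qed

lemma peeling_rank_exists:
  "Y \<subseteq> P \<Longrightarrow> \<exists>rk::nat \<Rightarrow> nat. inj_on rk Y \<and>
     (\<forall>u\<in>Y. card {y. (y \<in> C \<or> (y \<in> Y \<and> rk u < rk y)) \<and> {u, y} \<in> E} \<le> 1)"
proof (induction "card Y" arbitrary: Y)
  case 0
  then show ?case using finite_P finite_subset by fastforce
next
  case (Suc k)
  obtain v where v: "v \<in> Y" "card {u \<in> Y \<union> C. {u, v} \<in> E} < 2"
    using exists_low_degree[OF Suc.prems] Suc.hyps(2) by fastforce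
  have finY: "finite Y" using Suc.prems finite_P by (auto intro: finite_subset)
  have "k = card (Y - {v})" using Suc.hyps(2) v finY by simp
  then obtain rk' :: "nat \<Rightarrow> nat" where rk': "inj_on rk' (Y - {v})"
    "\<forall>u\<in>Y - {v}. card {y. (y \<in> C \<or> (y \<in> Y - {v} \<and> rk' u < rk' y)) \<and> {u, y} \<in> E} \<le> 1"
    using Suc.hyps(1)[of "Y - {v}"] Suc.prems by blast
  define rk where "rk u = (if u = v then 0 else Suc (rk' u))" for u
  have "card {y. (y \<in> C \<or> (y \<in> Y \<and> rk u < rk y)) \<and> {u, y} \<in> E} \<le> 1" if u: "u \<in> Y" for u
  proof (cases "u = v")
    case True
    have "{y. (y \<in> C \<or> (y \<in> Y \<and> rk u < rk y)) \<and> {u, y} \<in> E} \<subseteq> {u \<in> Y \<union> C. {u, v} \<in> E}"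
      using True by (auto simp: insert_commute)
    then have "card {y. (y \<in> C \<or> (y \<in> Y \<and> rk u < rk y)) \<and> {u, y} \<in> E} \<le> card {u \<in> Y \<union> C. {u, v} \<in> E}"
      using finY finite_C by (intro card_mono) auto
    then show ?thesis using v by simp
  next
    case False
    have "{y. (y \<in> C \<or> (y \<in> Y \<and> rk u < rk y)) \<and> {u, y} \<in> E} =
          {y. (y \<in> C \<or> (y \<in> Y - {v} \<and> rk' u < rk' y)) \<and> {u, y} \<in> E}"
      using False by (auto simp: rk_def)
    then show ?thesis using rk'(2) u False by auto
  qed
  moreover have "inj_on rk Y" using rk'(1) by (auto simp: inj_on_def rk_def split: if_splits)
  ultimately show ?case by blast
qed

end

locale pendant_forest = component_core +
  fixes rk :: "nat \<Rightarrow> nat"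
  assumes rk_inj: "inj_on rk P"
    and rk_peeling: "\<forall>u\<in>P. card {y. (y \<in> C \<or> (y \<in> P \<and> rk u < rk y)) \<and> {u, y} \<in> E} \<le> 1"
begin

definition "up_nbrs u = {y. (y \<in> C \<or> (y \<in> P \<and> rk u < rk y)) \<and> {u, y} \<in> E}"
definition "has_parent u \<longleftrightarrow> up_nbrs u \<noteq> {}"
definition "parent u = (THE y. y \<in> up_nbrs u)"
definition "parent_rel = {(z, parent z) | z. z \<in> P \<and> has_parent z}"
definition "subtree y = {z. (z, y) \<in> parent_rel\<^sup>*}"

lemma up_nbrs_unique: assumes "u \<in> P" "y \<in> up_nbrs u" "y' \<in> up_nbrs u" shows "y = y'"
proof -
  have "up_nbrs u \<subseteq> {1..n}" using edge_ends by (auto simp: up_nbrs_def)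
  then have "finite (up_nbrs u)" using finite_subset by blast
  moreover have "card (up_nbrs u) \<le> 1" using rk_peeling assms(1) by (simp add: up_nbrs_def)
  ultimately show ?thesis using assms card_le_Suc0_iff_eq by auto
qed

lemma parent_eqI: assumes "u \<in> P" "y \<in> up_nbrs u" shows "has_parent u \<and> parent u = y"
  using assms up_nbrs_unique unfolding has_parent_def parent_def by blast

lemma parent_in_up_nbrs: assumes "u \<in> P" "has_parent u" shows "parent u \<in> up_nbrs u"
  using assms parent_eqI unfolding has_parent_def by blast

lemma parent_edge: "u \<in> P \<Longrightarrow> has_parent u \<Longrightarrow> {u, parent u} \<in> E"
  using parent_in_up_nbrs by (auto simp: up_nbrs_def)

lemma parent_up:
  "u \<in> P \<Longrightarrow> has_parent u \<Longrightarrow> parent u \<in> C \<or> (parent u \<in> P \<and> rk u < rk (parent u))"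
  using parent_in_up_nbrs by (auto simp: up_nbrs_def)

lemma edge_at_P_cases:
  assumes u: "u \<in> P" and e: "{u, y} \<in> E"
  shows "(has_parent u \<and> y = parent u) \<or> (y \<in> P \<and> has_parent y \<and> parent y = u)"
proof (cases "y \<in> C")
  case True
  then show ?thesis using e parent_eqI[OF u] by (auto simp: up_nbrs_def)
next
  case False
  then have yP: "y \<in> P" using H_closed[of u y] e u by (auto simp: P_def)
  have "rk y \<noteq> rk u" using rk_inj yP u edge_ends[OF e] by (auto simp: inj_on_def)
  then consider "rk u < rk y" | "rk y < rk u" by linarith
  then show ?thesis
  proof cases
    case 1
    then show ?thesis using e yP parent_eqI[OF u] by (auto simp: up_nbrs_def)
  next
    case 2
    then show ?thesis using e u parent_eqI[OF yP] yP by (auto simp: up_nbrs_def insert_commute)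
  qed
qed

lemma subtree_self: "y \<in> subtree y" by (simp add: subtree_def)

lemma subtree_trans: "z \<in> subtree y \<Longrightarrow> y \<in> subtree w \<Longrightarrow> z \<in> subtree w"
  by (auto simp: subtree_def)

lemma child_in_subtree: "c \<in> P \<Longrightarrow> has_parent c \<Longrightarrow> c \<in> subtree (parent c)"
  by (auto simp: subtree_def parent_rel_def)

lemma subtree_step:
  assumes "z \<in> subtree y" "z \<noteq> y"
  shows "z \<in> P \<and> has_parent z \<and> parent z \<in> subtree y"
proof -
  obtain w where "(z, w) \<in> parent_rel" "(w, y) \<in> parent_rel\<^sup>*"
    using assms by (metis converse_rtranclE mem_Collect_eq subtree_def)
  then show ?thesis by (auto simp: parent_rel_def subtree_def)
qed

lemma subtree_subset_P: "y \<in> P \<Longrightarrow> subtree y \<subseteq> P"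
  using subtree_step by (metis subsetI)

lemma rk_subtree: assumes "y \<in> P" "z \<in> subtree y" "z \<noteq> y" shows "rk z < rk y"
proof -
  have "(z, y) \<in> parent_rel\<^sup>*" using assms by (simp add: subtree_def)
  then have "rk z \<le> rk y \<and> (z \<noteq> y \<longrightarrow> rk z < rk y)"
  proof (induction rule: converse_rtrancl_induct)
    case (step z w)
    then have z: "z \<in> P" "has_parent z" "w = parent z" by (auto simp: parent_rel_def)
    have "w \<in> subtree y" using step(2) by (simp add: subtree_def)
    then have "w \<in> P" using subtree_subset_P[OF assms(1)] by blast
    then have "rk z < rk w" using parent_up[OF z(1,2)] z(3) P_C_disjoint by auto
    then show ?case using step.IH by auto
  qed simp
  then show ?thesis using assms(3) by simp
qed

lemma subtree_antisym:
  assumes "y \<in> P" "z \<in> P" "z \<in> subtree y" "y \<in> subtree z" shows "y = z"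
  using rk_subtree[OF assms(1,3)] rk_subtree[OF assms(2,4)] by fastforce

lemma walk_into_subtree:
  assumes y: "y \<in> P"
  shows "(a, b) \<in> adj E Q ^^ k \<Longrightarrow> a \<notin> subtree y \<Longrightarrow> b \<in> subtree y \<Longrightarrow>
         has_parent y \<and> parent y \<in> Q \<and> (\<exists>j<k. (a, parent y) \<in> adj E Q ^^ j)"
proof (induction k arbitrary: b)
  case (Suc k)
  from Suc.prems(1) obtain b' where b': "(a, b') \<in> adj E Q ^^ k" "(b', b) \<in> adj E Q" by auto
  show ?case
  proof (cases "b' \<in> subtree y")
    case True
    then show ?thesis using Suc.IH[OF b'(1) Suc.prems(2)] by (auto intro: less_SucI)
  next
    case False
    have e: "{b, b'} \<in> E" "b' \<in> Q" using b'(2) by (auto simp: adj_def insert_commute)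
    have "b \<in> P" using subtree_subset_P[OF y] Suc.prems(3) by blast
    from edge_at_P_cases[OF this e(1)] show ?thesis
    proof
      assume h: "has_parent b \<and> b' = parent b"
      then have "b = y" using subtree_step[OF Suc.prems(3)] False by auto
      then show ?thesis using h e b'(1) by auto
    next
      assume "b' \<in> P \<and> has_parent b' \<and> parent b' = b"
      then have "b' \<in> subtree y" using child_in_subtree subtree_trans Suc.prems(3) by metis
      then show ?thesis using False by simp
    qed
  qed
qed simp

lemma subtree_connected:
  assumes "y \<in> P" "subtree y \<subseteq> Q" "z \<in> subtree y"
  shows "(z, y) \<in> (adj E Q)\<^sup>*"
proof -
  have "(z, y) \<in> parent_rel\<^sup>*" using assms by (simp add: subtree_def)
  then show ?thesis using assms(3)
  proof (induction rule: converse_rtrancl_induct)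
    case (step z w)
    then have z: "z \<in> P" "has_parent z" "w = parent z" by (auto simp: parent_rel_def)
    have "w \<in> subtree y" using step(2) by (simp add: subtree_def)
    then have "(z, w) \<in> adj E Q" using assms(2) step.prems parent_edge[OF z(1,2)] z(3)
      by (auto simp: adj_def)
    then show ?case using step.IH \<open>w \<in> subtree y\<close> by (meson converse_rtrancl_into_rtrancl)
  qed simp
qed

end

text \<open>Every edge at a
  free vertex, i.e. a hull vertex that is not an anchor (a core vertex of \<open>S\<close> or the at most one
  orphan), is an edge of the pendant forest inside the hull.\<close>

locale connected_piece = pendant_forest +
  fixes S :: "nat set"
  assumes S_subset: "S \<subseteq> H" and S_connected: "induces_connected E S"
begin

definition "pendant_hull = S \<union> (\<Union>y\<in>S \<inter> P. subtree y)"
definition "orphans = {y \<in> S \<inter> P. \<not> (has_parent y \<and> parent y \<in> S)}"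
definition "anchors = (S \<inter> C) \<union> orphans"

lemma S_subset_hull: "S \<subseteq> pendant_hull" by (auto simp: pendant_hull_def)

lemma subtree_subset_hull: "y \<in> S \<inter> P \<Longrightarrow> subtree y \<subseteq> pendant_hull"
  by (auto simp: pendant_hull_def)

lemma hull_subset_H: "pendant_hull \<subseteq> H"
proof -
  have "subtree y \<subseteq> H" if "y \<in> P" for y using subtree_subset_P[OF that] by (auto simp: P_def)
  then show ?thesis using S_subset by (auto simp: pendant_hull_def)
qed

lemma anchors_subset_S: "anchors \<subseteq> S" by (auto simp: anchors_def orphans_def)

lemma orphans_subset_P: "orphans \<subseteq> P" by (auto simp: orphans_def)

lemma S_subset_subtree_orphan: assumes b: "b \<in> orphans" shows "S \<subseteq> subtree b"
proof
  fix s assume s: "s \<in> S"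
  show "s \<in> subtree b"
  proof (rule ccontr)
    assume s_out: "s \<notin> subtree b"
    have bSP: "b \<in> S" "b \<in> P" using b by (auto simp: orphans_def)
    then have "(s, b) \<in> (adj E S)\<^sup>*"
      using S_connected s by (auto simp: induces_connected_def)
    then obtain k where "(s, b) \<in> adj E S ^^ k" by (auto simp: rtrancl_power)
    from walk_into_subtree[OF bSP(2) this s_out subtree_self]
    have "has_parent b \<and> parent b \<in> S" by blast
    then show False using b by (auto simp: orphans_def)
  qed
qed

lemma hull_subset_subtree_orphan:
  assumes "b \<in> orphans" shows "pendant_hull \<subseteq> subtree b"
proof -
  have "S \<subseteq> subtree b" using assms by (rule S_subset_subtree_orphan)
  then show ?thesis unfolding pendant_hull_def using subtree_trans by blast
qed

lemma card_orphans_le_1: "card orphans \<le> 1"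
proof -
  have "finite orphans" using finite_P orphans_subset_P finite_subset by blast
  moreover have "b = b'" if "b \<in> orphans" "b' \<in> orphans" for b b'
  proof -
    have "b \<in> S" "b' \<in> S" "b \<in> P" "b' \<in> P" using that by (auto simp: orphans_def)
    then have "b' \<in> subtree b" "b \<in> subtree b'" using S_subset_subtree_orphan that by auto
    then show ?thesis using subtree_antisym \<open>b \<in> P\<close> \<open>b' \<in> P\<close> by blast
  qed
  ultimately show ?thesis using card_le_Suc0_iff_eq[of orphans] by auto
qed

lemma card_anchors_le: "card anchors \<le> card (S \<inter> C) + 1"
  using card_Un_le[of "S \<inter> C" orphans] card_orphans_le_1 unfolding anchors_def by linarith

text \<open>Otherwise every vertex of \<open>S\<close> would have its parent in \<open>S\<close>, and following parents from
  the vertex of maximal rank would leave \<open>S\<close>.\<close>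

lemma anchors_nonempty: "anchors \<noteq> {}"
proof
  assume "anchors = {}"
  then have SP: "S \<subseteq> P" and up: "\<And>s. s \<in> S \<Longrightarrow> has_parent s \<and> parent s \<in> S"
    using S_subset by (auto simp: anchors_def orphans_def P_def)
  have "finite S" "S \<noteq> {}"
    using S_subset finite_H S_connected finite_subset by (auto simp: induces_connected_def)
  then have "Max (rk ` S) \<in> rk ` S" by (intro Max_in) auto
  then obtain s where s: "s \<in> S" "rk s = Max (rk ` S)" by (metis imageE)
  then have "parent s \<in> S" "has_parent s" using up by auto
  then have "rk (parent s) \<le> rk s" using s \<open>finite S\<close> by simp
  moreover have "parent s \<in> P" using \<open>parent s \<in> S\<close> SP by auto
  ultimately show False using parent_up[of s] s SP P_C_disjoint \<open>has_parent s\<close> by auto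
qed

lemma hull_connected:
  assumes r: "r \<in> S" shows "\<forall>z\<in>pendant_hull. (r, z) \<in> (adj E pendant_hull)\<^sup>*"
proof
  fix z assume "z \<in> pendant_hull"
  have S_walk: "(r, s) \<in> (adj E pendant_hull)\<^sup>*" if "s \<in> S" for s
  proof -
    have "(r, s) \<in> (adj E S)\<^sup>*" using S_connected r that by (auto simp: induces_connected_def)
    then show ?thesis using rtrancl_mono[OF adj_mono[OF S_subset_hull]] by blast
  qed
  from \<open>z \<in> pendant_hull\<close> consider "z \<in> S" | y where "y \<in> S \<inter> P" "z \<in> subtree y"
    by (auto simp: pendant_hull_def)
  then show "(r, z) \<in> (adj E pendant_hull)\<^sup>*"
  proof cases
    case 2
    then have "(z, y) \<in> (adj E pendant_hull)\<^sup>*"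
      using subtree_connected[of y pendant_hull z] subtree_subset_hull by auto
    then have "(y, z) \<in> (adj E pendant_hull)\<^sup>*" by (rule rtrancl_adj_sym)
    then show ?thesis using S_walk 2 by (meson IntD1 rtrancl_trans)
  qed (use S_walk in auto)
qed

lemma free_in_subtree:
  assumes "w \<in> pendant_hull - anchors" shows "\<exists>y\<in>S \<inter> P. w \<in> subtree y"
proof (cases "w \<in> S")
  case True
  then have "w \<in> P" using assms S_subset by (auto simp: anchors_def P_def)
  then show ?thesis using True subtree_self by blast
qed (use assms in \<open>auto simp: pendant_hull_def\<close>)

lemma free_in_P: "w \<in> pendant_hull - anchors \<Longrightarrow> w \<in> P"
  using free_in_subtree subtree_subset_P by blast

lemma free_nbr_in_hull:
  assumes w: "w \<in> pendant_hull - anchors" and e: "{w, y} \<in> E"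
  shows "y \<in> pendant_hull"
proof -
  obtain y0 where y0: "y0 \<in> S \<inter> P" "w \<in> subtree y0" using free_in_subtree[OF w] by auto
  from edge_at_P_cases[OF free_in_P[OF w] e] show ?thesis
  proof
    assume h: "has_parent w \<and> y = parent w"
    show ?thesis
    proof (cases "w = y0")
      case True
      then have "w \<notin> orphans" using w by (auto simp: anchors_def)
      then show ?thesis using h True y0 S_subset_hull by (auto simp: orphans_def)
    next
      case False
      then show ?thesis using h subtree_step[OF y0(2)] subtree_subset_hull[OF y0(1)] by auto
    qed
  next
    assume "y \<in> P \<and> has_parent y \<and> parent y = w"
    then have "y \<in> subtree y0" using child_in_subtree subtree_trans y0(2) by metis
    then show ?thesis using subtree_subset_hull[OF y0(1)] by auto
  qed
qed

lemma anchor_notin_subtree: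
  assumes r: "r \<in> anchors" and y: "y \<in> pendant_hull" "y \<in> P" "y \<noteq> r"
  shows "r \<notin> subtree y"
proof
  assume ry: "r \<in> subtree y"
  show False
  proof (cases "r \<in> orphans")
    case True
    then have "y \<in> subtree r" using hull_subset_subtree_orphan y(1) by auto
    then show False using subtree_antisym[of r y] ry y True orphans_subset_P by auto
  next
    case False
    then have "r \<in> C" using r by (auto simp: anchors_def)
    then show False using ry subtree_subset_P[OF y(2)] P_C_disjoint by auto
  qed
qed

end

locale hull_bfs = connected_piece +
  fixes r :: nat and depth par :: "nat \<Rightarrow> nat"
  assumes root_anchor: "r \<in> anchors" and bfs: "bfs_parent E pendant_hull r depth par"
begin

lemma parent_closer:
  assumes y: "y \<in> pendant_hull" "y \<in> P" "y \<noteq> r"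
  shows "has_parent y \<and> parent y \<in> pendant_hull \<and> depth (parent y) < depth y"
proof -
  have "(r, y) \<in> adj E pendant_hull ^^ depth y" using bfs y by (auto simp: bfs_parent_def)
  from walk_into_subtree[OF y(2) this anchor_notin_subtree[OF root_anchor y] subtree_self]
  obtain j where "has_parent y" "parent y \<in> pendant_hull" "j < depth y"
    "(r, parent y) \<in> adj E pendant_hull ^^ j"
    by auto
  moreover then have "depth (parent y) \<le> j" using bfs by (auto simp: bfs_parent_def)
  ultimately show ?thesis by auto
qed

text \<open>On free vertices the breadth-first tree follows the pendant forest: the alternative,
  a child as BFS parent, would make the child strictly closer to the root than its own parent.\<close>

lemma bfs_parent_eq_parent:
  assumes w: "w \<in> pendant_hull - anchors"
  shows "par w = parent w"
proof -
  have wr: "w \<in> pendant_hull - {r}" using w root_anchor by auto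
  have closer: "depth (par w) < depth w" and "{w, par w} \<in> E" "par w \<in> pendant_hull"
    using bfs bfs_parent_edge[OF bfs wr] wr by (auto simp: bfs_parent_def)
  from edge_at_P_cases[OF free_in_P[OF w] this(2)] show ?thesis
  proof
    assume h: "par w \<in> P \<and> has_parent (par w) \<and> parent (par w) = w"
    have "par w \<noteq> r"
    proof
      assume "par w = r"
      then have "r \<in> orphans" using h root_anchor P_C_disjoint by (auto simp: anchors_def)
      then have "w \<in> subtree r" using hull_subset_subtree_orphan w by auto
      moreover have "r \<in> subtree w" using child_in_subtree h \<open>par w = r\<close> by fastforce
      ultimately show False
        using subtree_antisym[of r w] \<open>r \<in> orphans\<close> orphans_subset_P free_in_P[OF w] wr by auto
    qed
    then show ?thesis using parent_closer[of "par w"] h \<open>par w \<in> pendant_hull\<close> closer by auto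
  qed simp
qed

lemma free_edge_in_tree:
  assumes e: "e \<in> E" and w: "w \<in> e" "w \<in> pendant_hull - anchors"
  shows "e \<in> tree_edges pendant_hull r par"
proof -
  obtain y where ey: "e = {w, y}"
    using e w(1) edges_valid by (auto simp: all_edges_def)
  have wr: "w \<in> pendant_hull - {r}" using w root_anchor by auto
  from edge_at_P_cases[OF free_in_P[OF w(2)]] e ey
  consider "has_parent w \<and> y = parent w" | "y \<in> P \<and> has_parent y \<and> parent y = w" by auto
  then show ?thesis
  proof cases
    case 1
    then show ?thesis using ey bfs_parent_eq_parent[OF w(2)] wr by (auto simp: tree_edges_def)
  next
    case 2
    have "y \<notin> orphans"
    proof
      assume "y \<in> orphans"
      then have "w \<in> subtree y" using hull_subset_subtree_orphan w(2) by auto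
      moreover have "y \<in> subtree w" using child_in_subtree 2 by fastforce
      moreover have "y \<noteq> w" using edge_ends[of w y] e ey by blast
      ultimately show False using subtree_antisym[of y w] 2 free_in_P[OF w(2)] by auto
    qed
    then have y: "y \<in> pendant_hull - anchors"
      using free_nbr_in_hull[OF w(2)] e ey 2 P_C_disjoint by (auto simp: anchors_def)
    then have "e = {y, par y}" using bfs_parent_eq_parent 2 ey by (auto simp: insert_commute)
    then show ?thesis using y root_anchor by (auto simp: tree_edges_def)
  qed
qed

end

context connected_piece
begin

lemma tree_witness:
  "\<exists>r par. r \<in> pendant_hull \<and> par \<in> parent_maps n pendant_hull r
     \<and> E \<in> tree_event n pendant_hull anchors r par"
proof -
  obtain r where r: "r \<in> anchors" using anchors_nonempty by auto
  then obtain depth par where bfs: "bfs_parent E pendant_hull r depth par"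
    using bfs_parent_exists hull_connected anchors_subset_S by blast
  interpret hull_bfs n E H rk S r depth par
    using r bfs by unfold_locales
  define par' where "par' = restrict par (pendant_hull - {r})"
  have tree: "tree_edges pendant_hull r par' = tree_edges pendant_hull r par"
    by (auto simp: tree_edges_def par'_def)
  have "inj_on (\<lambda>v. {v, par' v}) (pendant_hull - {r})"
    using bfs_parent_inj[OF bfs] by (rule inj_on_cong[THEN iffD1, rotated]) (simp add: par'_def)
  then have "par' \<in> parent_maps n pendant_hull r"
    using bfs_parent_edge[OF bfs] edges_valid unfolding parent_maps_def tree
    by (auto simp: tree_edges_def par'_def)
  moreover have "E \<in> tree_event n pendant_hull anchors r par'"
  proof -
    have "tree_edges pendant_hull r par \<subseteq> E"
      using bfs_parent_edge(3)[OF bfs] by (auto simp: tree_edges_def)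
    moreover have "e \<in> tree_edges pendant_hull r par"
      if "e \<in> E" "e \<inter> (pendant_hull - anchors) \<noteq> {}" for e
      using that free_edge_in_tree by blast
    ultimately show ?thesis unfolding tree_event_def tree by (auto simp: edges_meeting_def)
  qed
  moreover have "r \<in> pendant_hull" using r anchors_subset_S S_subset_hull by blast
  ultimately show ?thesis by blast
qed

end

lemma connected_set_tree_witness:
  assumes E: "E \<subseteq> all_edges n" and H: "H \<in> components E {1..n}"
    and S: "S \<subseteq> H" "induces_connected E S"
  shows "\<exists>X D r par. S \<subseteq> X \<and> X \<subseteq> {1..n} \<and> D \<subseteq> X \<and> card D \<le> card (S \<inter> core E H) + 1
    \<and> r \<in> X \<and> par \<in> parent_maps n X r \<and> E \<in> tree_event n X D r par"
proof -
  interpret component_core n E H using E H by unfold_locales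
  obtain rk :: "nat \<Rightarrow> nat" where "inj_on rk P"
    "\<forall>u\<in>P. card {y. (y \<in> C \<or> (y \<in> P \<and> rk u < rk y)) \<and> {u, y} \<in> E} \<le> 1"
    using peeling_rank_exists[OF subset_refl] by blast
  then interpret connected_piece n E H rk S using S by unfold_locales
  obtain r par where "r \<in> pendant_hull" "par \<in> parent_maps n pendant_hull r"
    "E \<in> tree_event n pendant_hull anchors r par"
    using tree_witness by blast
  moreover have "S \<subseteq> pendant_hull" "pendant_hull \<subseteq> {1..n}" "anchors \<subseteq> pendant_hull"
    using S_subset_hull hull_subset_H H_subset anchors_subset_S by auto
  ultimately show ?thesis using card_anchors_le unfolding C_def by blast
qed

section \<open>The union bound\<close>

definition bad_event :: "nat \<Rightarrow> nat \<Rightarrow> real \<Rightarrow> nat set set set" where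
  "bad_event n K th =
     (\<Union>X\<in>{X. X \<subseteq> {1..n} \<and> K \<le> card X}. \<Union>D\<in>{D. D \<subseteq> X \<and> real (card D) \<le> th * real (card X)}.
        \<Union>r\<in>X. \<Union>par\<in>parent_maps n X r. tree_event n X D r par)"

lemma measure_pmf_UN_le:
  "finite I \<Longrightarrow> measure_pmf.prob M (\<Union>i\<in>I. A i) \<le> (\<Sum>i\<in>I. measure_pmf.prob M (A i))"
  by (rule measure_pmf.finite_measure_subadditive_finite) auto

lemma prob_tree_events_of_set_le:
  assumes X: "X \<subseteq> {1..n}" "X \<noteq> {}" and th: "0 < th" "th \<le> 1" and p: "0 \<le> p" "p \<le> 1"
  defines "m \<equiv> card X"
  shows "measure_pmf.prob (Gnp n p) (\<Union>D\<in>{D. D \<subseteq> X \<and> real (card D) \<le> th * real m}.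
      \<Union>r\<in>X. \<Union>par\<in>parent_maps n X r. tree_event n X D r par)
    \<le> exp (m * (th + 2 * sqrt th)) * real m ^ m * (p ^ (m - 1) * exp (- p * absent_pairs_bound n th m))"
proof -
  define Ds where "Ds = {D. D \<subseteq> X \<and> real (card D) \<le> th * real m}"
  define b where "b = p ^ (m - 1) * exp (- p * absent_pairs_bound n th m)"
  have finX: "finite X" using X finite_subset by blast
  have finDs: "finite Ds" using finX by (auto simp: Ds_def)
  have "measure_pmf.prob (Gnp n p) (\<Union>par\<in>parent_maps n X r. tree_event n X D r par) \<le> real m ^ (m - 1) * b"
    if D: "D \<in> Ds" and r: "r \<in> X" for D r
  proof -
    have "measure_pmf.prob (Gnp n p) (\<Union>par\<in>parent_maps n X r. tree_event n X D r par)
        \<le> (\<Sum>par\<in>parent_maps n X r. b)"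
      using prob_tree_event_le[OF X(1) _ r _ _ p] D unfolding b_def m_def Ds_def
      by (intro order_trans[OF measure_pmf_UN_le sum_mono] finite_parent_maps finX) auto
    also have "\<dots> \<le> real m ^ (m - 1) * b"
      using card_parent_maps_le[OF finX r] p
      by (simp add: b_def m_def) (metis mult_right_mono of_nat_le_iff of_nat_power zero_le_mult_iff exp_ge_zero zero_le_power)
    finally show ?thesis .
  qed
  then have "measure_pmf.prob (Gnp n p) (\<Union>D\<in>Ds. \<Union>r\<in>X. \<Union>par\<in>parent_maps n X r. tree_event n X D r par)
      \<le> (\<Sum>D\<in>Ds. \<Sum>r\<in>X. real m ^ (m - 1) * b)"
    by (intro order_trans[OF measure_pmf_UN_le[OF finDs] sum_mono]
        order_trans[OF measure_pmf_UN_le[OF finX] sum_mono])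
  also have "\<dots> = real (card Ds) * (real m * real m ^ (m - 1) * b)"
    by (simp add: m_def mult.assoc)
  also have "\<dots> = real (card Ds) * (real m ^ m * b)"
    using X finX by (cases m) (auto simp: m_def)
  also have "\<dots> \<le> exp (m * (th + 2 * sqrt th)) * (real m ^ m * b)"
    using card_small_subsets_le[OF finX th] p unfolding Ds_def m_def b_def
    by (intro mult_right_mono) auto
  finally show ?thesis by (simp add: Ds_def b_def mult.assoc)
qed

lemma sum_subsets_by_card:
  fixes f :: "nat \<Rightarrow> real"
  shows "(\<Sum>X\<in>{X. X \<subseteq> {1..n} \<and> K \<le> card X}. f (card X)) = (\<Sum>m=K..n. real (n choose m) * f m)"
proof -
  have "{X. X \<subseteq> {1..n} \<and> K \<le> card X} = (\<Union>m\<in>{K..n}. {X. X \<subseteq> {1..n} \<and> card X = m})"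
    using card_mono[of "{1..n}"] by fastforce
  then have "(\<Sum>X\<in>{X. X \<subseteq> {1..n} \<and> K \<le> card X}. f (card X))
      = (\<Sum>m=K..n. \<Sum>X\<in>{X. X \<subseteq> {1..n} \<and> card X = m}. f (card X))"
    by (simp only:) (intro sum.UNION_disjoint, auto)
  also have "\<dots> = (\<Sum>m=K..n. real (n choose m) * f m)"
    using n_subsets[of "{1..n}"] by (intro sum.cong refl) simp
  finally show ?thesis .
qed

lemma prob_bad_event_le:
  assumes K: "1 \<le> K" and th: "0 < th" "th \<le> 1" and p: "0 \<le> p" "p \<le> 1"
  shows "measure_pmf.prob (Gnp n p) (bad_event n K th) \<le> (\<Sum>m=K..n. real (n choose m)
    * exp (m * (th + 2 * sqrt th)) * real m ^ m * p ^ (m - 1) * exp (- p * absent_pairs_bound n th m))"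
proof -
  have fin: "finite {X. X \<subseteq> {1..n} \<and> K \<le> card X}"
    by (rule finite_subset[of _ "Pow {1..n}"]) auto
  have "measure_pmf.prob (Gnp n p) (bad_event n K th) \<le> (\<Sum>X\<in>{X. X \<subseteq> {1..n} \<and> K \<le> card X}.
      exp (card X * (th + 2 * sqrt th)) * real (card X) ^ card X
        * (p ^ (card X - 1) * exp (- p * absent_pairs_bound n th (card X))))"
    unfolding bad_event_def using K
    by (intro order_trans[OF measure_pmf_UN_le[OF fin] sum_mono] prob_tree_events_of_set_le th p)
       auto
  also have "\<dots> = (\<Sum>m=K..n. real (n choose m) * exp (m * (th + 2 * sqrt th)) * real m ^ m
      * p ^ (m - 1) * exp (- p * absent_pairs_bound n th m))"
    by (subst sum_subsets_by_card) (simp add: mult_ac)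
  finally show ?thesis .
qed

definition sparsity :: "real \<Rightarrow> real \<Rightarrow> real" where
  "sparsity c1 c2 = (decay_rate c1 / (2 * (3 + c2)))^2"

lemma sparsity_bounds:
  assumes "1 < c1" "c1 < c2"
  shows "0 < sparsity c1 c2" "sparsity c1 c2 < 1"
proof -
  define s where "s = decay_rate c1 / (2 * (3 + c2))"
  have "0 < s" "s < 1"
    using decay_rate_pos[of c1] decay_rate_le[of c1] assms by (auto simp: s_def field_simps)
  moreover have "sparsity c1 c2 = s^2" by (simp add: sparsity_def s_def)
  ultimately show "0 < sparsity c1 c2" "sparsity c1 c2 < 1" by (simp_all add: power_less_one_iff)
qed

lemma sparsity_exponent_le:
  assumes "1 < c1" "c1 < c2" "c \<le> c2" "0 < c"
  defines "th \<equiv> sparsity c1 c2"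
  shows "th + 2 * sqrt th + c * th \<le> decay_rate c1 / 2"
proof -
  define s where "s = decay_rate c1 / (2 * (3 + c2))"
  have s: "0 < s" "s \<le> 1"
    using decay_rate_pos[of c1] decay_rate_le[of c1] assms by (auto simp: s_def field_simps)
  have "th = s^2" by (simp add: th_def sparsity_def s_def)
  then have th: "th = s^2" "sqrt th = s" using s by simp_all
  have "th \<le> s" using s by (simp add: th power2_eq_square mult_left_le)
  moreover have "0 \<le> th" using th(1) by simp
  then have "c * th \<le> c2 * s" using \<open>th \<le> s\<close> assms by (intro mult_mono) auto
  moreover have "3 + c2 \<noteq> 0" using assms by linarith
  then have "(3 + c2) * s = decay_rate c1 / 2" by (simp add: s_def field_simps)
  then have "3 * s + c2 * s = decay_rate c1 / 2" by (simp add: algebra_simps)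
  ultimately show ?thesis unfolding th(2) by linarith
qed

lemma bad_event_term_le:
  assumes c: "1 < c1" "c1 < c" "c < c2" and m: "1 \<le> m" "m \<le> n"
  defines "th \<equiv> sparsity c1 c2"
  shows "real (n choose m) * exp (m * (th + 2 * sqrt th)) * real m ^ m * (c / n) ^ (m - 1)
      * exp (- (c / n) * absent_pairs_bound n th m)
    \<le> (n / c1) * exp (2 * c2) * exp (- (decay_rate c1 * m / 2))"
proof -
  have "th + 2 * sqrt th + c * th - decay_rate c1 \<le> - (decay_rate c1 / 2)"
    using sparsity_exponent_le[of c1 c2 c] c unfolding th_def by simp
  from mult_left_mono[OF this, of "real m"]
  have "m * (th + 2 * sqrt th + c * th - decay_rate c1) \<le> - (decay_rate c1 * m / 2)"
    by (simp add: algebra_simps)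
  then have "exp (m * (th + 2 * sqrt th + c * th - decay_rate c1)) \<le> exp (- (decay_rate c1 * m / 2))"
    by simp
  moreover have "n / c \<le> n / c1" "exp (2 * c) \<le> exp (2 * c2)"
    using c by (auto intro: divide_left_mono)
  ultimately have "(n / c) * exp (2 * c) * exp (m * (th + 2 * sqrt th + c * th - decay_rate c1))
      \<le> (n / c1) * exp (2 * c2) * exp (- (decay_rate c1 * m / 2))"
    using c by (intro mult_mono) auto
  with tree_term_le[OF m, of c1 c th] sparsity_bounds[of c1 c2] c show ?thesis
    unfolding th_def by linarith
qed

definition core_rich :: "nat \<Rightarrow> real \<Rightarrow> real \<Rightarrow> nat set set set" where
  "core_rich n chi l = {E. \<forall>H. is_largest_component n E H \<longrightarrow>
     (\<forall>S. S \<subseteq> H \<and> induces_connected E S \<and>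
        chi * ln (real n) \<le> real (card S) \<and> card S \<le> card (core E H) \<longrightarrow>
        real (card (S \<inter> core E H)) \<ge> real (card S) / l)}"

lemma not_core_rich_in_bad_event:
  assumes E: "E \<subseteq> all_edges n" "E \<notin> core_rich n chi (2 / th)"
    and th: "0 < th" and large: "2 / th \<le> chi * ln (real n)"
  shows "E \<in> bad_event n (nat \<lceil>chi * ln (real n)\<rceil>) th"
proof -
  obtain H S where H: "H \<in> components E {1..n}" and S: "S \<subseteq> H" "induces_connected E S"
    and S_large: "chi * ln (real n) \<le> real (card S)"
    and S_sparse: "real (card (S \<inter> core E H)) < real (card S) / (2 / th)"
    using E(2) by (auto simp: core_rich_def is_largest_component_def not_le)
  obtain X D r par where X: "S \<subseteq> X" "X \<subseteq> {1..n}" "D \<subseteq> X" "r \<in> X"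
    and D: "card D \<le> card (S \<inter> core E H) + 1"
    and tree: "par \<in> parent_maps n X r" "E \<in> tree_event n X D r par"
    using connected_set_tree_witness[OF E(1) H S] by blast
  have "real (card S) \<le> real (card X)" using X finite_subset card_mono by (metis finite_atLeastAtMost of_nat_mono)
  then have X_large: "chi * ln (real n) \<le> real (card X)" using S_large by linarith
  then have "nat \<lceil>chi * ln (real n)\<rceil> \<le> card X" by (simp add: nat_le_iff ceiling_le_iff)
  moreover have "real (card D) \<le> th * real (card X)"
  proof -
    have "2 / th \<le> real (card X)" using large X_large by linarith
    then have "2 \<le> th * real (card X)" using th by (simp add: field_simps)
    moreover have "th * real (card S) \<le> th * real (card X)"
      using \<open>real (card S) \<le> real (card X)\<close> th by simp
    moreover have "real (card S) / (2 / th) = th * real (card S) / 2" by simp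
    ultimately show ?thesis using D S_sparse by linarith
  qed
  ultimately show ?thesis using X tree unfolding bad_event_def by blast
qed

lemma exp_decay_le_inverse_cube:
  fixes g chi :: real and n m :: nat
  assumes g: "0 < g" and chi: "chi = 6 / g + 1" and n: "1 \<le> n" and m: "chi * ln (real n) \<le> real m"
  shows "exp (- (g * m / 2)) \<le> 1 / real n ^ 3"
proof -
  have "g * (chi * ln (real n)) \<le> g * m" using m by (rule mult_left_mono) (use g in simp)
  moreover have "g * (chi * ln (real n)) = 6 * ln (real n) + g * ln (real n)"
    using g by (simp add: chi field_simps)
  moreover have "0 \<le> g * ln (real n)" using g n by simp
  ultimately have "3 * ln (real n) \<le> g * m / 2" by linarith
  then have "exp (- (g * m / 2)) \<le> exp (- (3 * ln (real n)))" by simp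
  also have "\<dots> = 1 / real n ^ 3"
    using exp_of_nat_mult[of 3 "ln (real n)"] n by (simp add: exp_minus inverse_eq_divide)
  finally show ?thesis .
qed

lemma prob_bad_event_le_inverse:
  assumes c: "1 < c1" "c1 < c" "c < c2" and n: "c2 \<le> real n"
    and chi: "chi = 6 / decay_rate c1 + 1"
  defines "th \<equiv> sparsity c1 c2" and "K \<equiv> nat \<lceil>chi * ln (real n)\<rceil>"
  assumes large: "2 / th \<le> chi * ln (real n)"
  shows "measure_pmf.prob (Gnp n (c / n)) (bad_event n K th) \<le> 2 * exp (2 * c2) / c1 / real n"
proof -
  have th: "0 < th" "th \<le> 1" using sparsity_bounds[of c1 c2] c by (auto simp: th_def)
  have n1: "1 \<le> real n" using c n by linarith
  have p: "0 \<le> c / n" "c / n \<le> 1" using c n by (auto simp: field_simps)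
  have "2 \<le> 2 / th" using th by (simp add: field_simps)
  then have K: "1 \<le> K" "chi * ln (real n) \<le> real K" using large unfolding K_def by linarith+
  have "measure_pmf.prob (Gnp n (c / n)) (bad_event n K th)
      \<le> (\<Sum>m=K..n. (n / c1) * exp (2 * c2) * (1 / real n ^ 3))"
  proof (rule order_trans[OF prob_bad_event_le[OF K(1) th p] sum_mono])
    fix m assume m: "m \<in> {K..n}"
    then have "1 \<le> m" "m \<le> n" using K(1) by auto
    from bad_event_term_le[OF c this]
    have "real (n choose m) * exp (m * (th + 2 * sqrt th)) * real m ^ m * (c / n) ^ (m - 1)
        * exp (- (c / n) * absent_pairs_bound n th m)
      \<le> (n / c1) * exp (2 * c2) * exp (- (decay_rate c1 * m / 2))"
      by (simp add: th_def)
    also have "\<dots> \<le> (n / c1) * exp (2 * c2) * (1 / real n ^ 3)"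
      using exp_decay_le_inverse_cube[OF decay_rate_pos chi, of n m] K(2) m n1 c
      by (intro mult_left_mono) auto
    finally show "real (n choose m) * exp (m * (th + 2 * sqrt th)) * real m ^ m * (c / n) ^ (m - 1)
        * exp (- (c / n) * absent_pairs_bound n th m) \<le> (n / c1) * exp (2 * c2) * (1 / real n ^ 3)" .
  qed
  also have "\<dots> = real (card {K..n}) * ((n / c1) * exp (2 * c2) * (1 / real n ^ 3))"
    by simp
  also have "\<dots> \<le> (2 * real n) * ((n / c1) * exp (2 * c2) * (1 / real n ^ 3))"
    using n1 c K(1) by (intro mult_right_mono) auto
  also have "\<dots> = 2 * exp (2 * c2) / c1 / real n"
    using n1 by (simp add: field_simps power3_eq_cube)
  finally show ?thesis .
qed

lemma prob_core_rich_ge: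
  assumes c: "1 < c1" "c1 < c" "c < c2" and n: "c2 \<le> real n"
    and chi: "chi = 6 / decay_rate c1 + 1"
  defines "th \<equiv> sparsity c1 c2"
  assumes large: "2 / th \<le> chi * ln (real n)"
  shows "1 - 2 * exp (2 * c2) / c1 / real n \<le> measure_pmf.prob (Gnp n (c / n)) (core_rich n chi (2 / th))"
proof -
  define M where "M = Gnp n (c / n)"
  have th: "0 < th" using sparsity_bounds[of c1 c2] c by (auto simp: th_def)
  have "measure_pmf.prob M (- core_rich n chi (2 / th))
      = measure_pmf.prob M (- core_rich n chi (2 / th) \<inter> set_pmf M)"
    by (simp add: measure_Int_set_pmf)
  also have "\<dots> \<le> measure_pmf.prob M (bad_event n (nat \<lceil>chi * ln (real n)\<rceil>) th)"
    using not_core_rich_in_bad_event[OF _ _ th large] set_pmf_Gnp_subset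
    by (intro measure_pmf.finite_measure_mono) (auto simp: M_def)
  also have "\<dots> \<le> 2 * exp (2 * c2) / c1 / real n"
    unfolding M_def th_def using prob_bad_event_le_inverse[OF c n chi] large th_def by simp
  finally show ?thesis
    using measure_pmf.prob_compl[of "core_rich n chi (2 / th)" M] by (simp add: M_def Compl_eq_Diff_UNIV)
qed

lemma eventually_le_mult_ln:
  fixes a b chi :: real assumes "0 < chi"
  shows "eventually (\<lambda>n. a \<le> real n \<and> b \<le> chi * ln (real n)) sequentially"
proof -
  have "filterlim (\<lambda>n. ln (real n)) at_top sequentially"
    by (rule filterlim_compose[OF ln_at_top filterlim_real_sequentially])
  then have "eventually (\<lambda>n. b / chi \<le> ln (real n)) sequentially"
    by (simp add: filterlim_at_top)
  moreover have "eventually (\<lambda>n. a \<le> real n) sequentially"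
    using filterlim_real_sequentially by (simp add: filterlim_at_top)
  ultimately show ?thesis by eventually_elim (use assms in \<open>simp add: field_simps\<close>)
qed

lemma core_rich_tendsto_1:
  assumes c: "1 < c1" "c1 < c2" and d: "\<forall>n. c1 < d n \<and> d n < c2"
  defines "chi \<equiv> 6 / decay_rate c1 + 1" and "th \<equiv> sparsity c1 c2"
  shows "(\<lambda>n. measure_pmf.prob (Gnp n (d n / real n)) (core_rich n chi (2 / th))) \<longlonglongrightarrow> 1"
proof (rule tendsto_sandwich[OF _ _ _ tendsto_const])
  define C where "C = 2 * exp (2 * c2) / c1"
  show "(\<lambda>n. 1 - C / real n) \<longlonglongrightarrow> 1"
    using tendsto_diff[OF tendsto_const[of 1] lim_const_over_n[of C]] by simp
  have "0 < chi" using decay_rate_pos c by (simp add: chi_def add_pos_nonneg)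
  from eventually_le_mult_ln[OF this, of c2 "2 / th"]
  show "eventually (\<lambda>n. 1 - C / real n
      \<le> measure_pmf.prob (Gnp n (d n / real n)) (core_rich n chi (2 / th))) sequentially"
  proof eventually_elim
    case (elim n)
    then show ?case
      using prob_core_rich_ge[of c1 "d n" c2 n chi] d c unfolding C_def th_def chi_def by auto
  qed
  show "eventually (\<lambda>n. measure_pmf.prob (Gnp n (d n / real n))
      (core_rich n chi (2 / th)) \<le> 1) sequentially"
    by (simp add: measure_pmf.prob_le_1)
qed

theorem lemma12:
  fixes c1 c2 :: real
  assumes "1 < c1" and "c1 < c2"
  shows "\<exists>chi l :: real. chi > 1 \<and> l > 1 \<and>
    (\<forall>d :: nat \<Rightarrow> real. (\<forall>n. c1 < d n \<and> d n < c2) \<longrightarrow>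
      (\<lambda>n. measure_pmf.prob (Gnp n (d n / real n))
          {E. \<forall>H. is_largest_component n E H \<longrightarrow>
                (\<forall>S. S \<subseteq> H \<and> induces_connected E S \<and>
                     chi * ln (real n) \<le> real (card S) \<and> card S \<le> card (core E H) \<longrightarrow>
                     real (card (S \<inter> core E H)) \<ge> real (card S) / l)})
      \<longlonglongrightarrow> 1)"
proof -
  define chi where "chi = 6 / decay_rate c1 + 1"
  define th where "th = sparsity c1 c2"
  have "1 < chi" using decay_rate_pos assms by (simp add: chi_def)
  moreover have "1 < 2 / th" using sparsity_bounds[OF assms] by (simp add: th_def)
  moreover have "(\<lambda>n. measure_pmf.prob (Gnp n (d n / real n)) (core_rich n chi (2 / th))) \<longlonglongrightarrow> 1"
    if "\<forall>n. c1 < d n \<and> d n < c2" for d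
    using core_rich_tendsto_1[OF assms that] by (simp add: chi_def th_def)
  ultimately show ?thesis unfolding core_rich_def by blast
qed
end
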